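(* Let $\bm{X}\in\mathbb{R}^{n_1\times r}$, $\bm{Y}\in\mathbb{R}^{n_2\times r}$, and let $\bm{X}_\star,\bm{Y}_\star$ be the ground-truth factors (see context). Suppose there exist a matrix $\bm{P}\in\mathbb{R}^{r\times r}$ with $1/2\le\sigma_r(\bm{P})\le\sigma_1(\bm{P})\le3/2$ and a number $\delta$ such that \[ \max\big\{\|\bm{X}\bm{P}-\bm{X}_\star\|_{\mathrm{F}},\ \|\bm{Y}\bm{P}^{-\top}-\bm{Y}_\star\|_{\mathrm{F}}\big\}\le\delta\le\frac{\sigma_r(\bm{X}_\star)}{80}. \] Then the minimum of $g(\bm{Q})=\|\bm{X}\bm{Q}-\bm{X}_\star\|_{\mathrm{F}}^2+\|\bm{Y}\bm{Q}^{-\top}-\bm{Y}_\star\|_{\mathrm{F}}^2$ over invertible $\bm{Q}\in\mathbb{R}^{r\times r}$ is attained, and a minimizer $\bm{Q}$ (the optimal alignment matrix) satisfies \[ \|\bm{P}-\bm{Q}\|\le\|\bm{P}-\bm{Q}\|_{\mathrm{F}}\le\frac{5\delta}{\sigma_r(\bm{X}_\star)}. \]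
   Context: $\bm{M}_\star\in\mathbb{R}^{n_1\times n_2}$ has rank $r$ and compact SVD $\bm{M}_\star=\bm{U}_\star\bm{\Sigma}_\star\bm{V}_\star^\top$; $\bm{X}_\star=\bm{U}_\star\bm{\Sigma}_\star^{1/2}$, $\bm{Y}_\star=\bm{V}_\star\bm{\Sigma}_\star^{1/2}$. $\sigma_k(\cdot)$ denotes the $k$th largest singular value, $\|\cdot\|$ the spectral norm, and $\bm{P}^{-\top}=(\bm{P}^{-1})^\top$. *)

theory Defs
  imports "HOL-Analysis.Analysis"
begin

text \<open>Matrices are elements of real^'c^'m (m rows, c columns). The HOL-Analysis norm on
  real^'c^'m is the Frobenius norm. The spectral norm is the operator norm of x maps to A x.\<close>

definition spec_norm :: "real^'c^'m \<Rightarrow> real" where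
  "spec_norm A = onorm (\<lambda>x. A *v x)"

text \<open>k-th largest singular value (k >= 1), via the Courant-Fischer max-min formula:
  sigma_k(A) = max over k-dimensional subspaces S of min over unit x in S of the norm of A x.
  (For k beyond min(rows, cols) this gives 0, the usual convention.)\<close>

definition sing_val :: "nat \<Rightarrow> real^'c^'m \<Rightarrow> real" where
  "sing_val k A = Sup {Inf {norm (A *v x) | x. x \<in> S \<and> norm x = 1} | S.
        subspace S \<and> dim S = k}"

definition diag_mat :: "('r::finite \<Rightarrow> real) \<Rightarrow> real^'r^'r" where
  "diag_mat s = (\<chi> i j. if i = j then s i else 0)"

end

theory Submission
  imports Defs
begin

text \<open>Write \<open>E = X P - Xs\<close> and \<open>M = P\<^sup>-\<^sup>1 (Q - P)\<close>. Any invertible \<open>Q\<close> with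
  \<open>g(Q) \<le> g(P) \<le> 2\<delta>\<^sup>2\<close> has both residuals at most \<open>3\<delta>/2\<close>, so
  \<open>X (Q - P) = (Xs + E) M\<close> has Frobenius norm at most \<open>5\<delta>/2\<close>. Since
  \<open>\<sigma>\<^sub>r(Xs + E) \<ge> \<sigma>\<^sub>r(Xs) - \<delta>\<close>, this bounds \<open>M\<close>, and
  \<open>\<parallel>Q - P\<parallel> \<le> \<sigma>\<^sub>1(P) \<parallel>M\<parallel>\<close> gives the distance bound. The same argument
  on the \<open>Y\<close>-factor bounds \<open>\<parallel>Q\<^sup>-\<^sup>1\<parallel>\<close> on this sublevel set, so
  \<open>g\<close> may be minimised over a compact set of pairs \<open>(Q, Q\<^sup>-\<^sup>1)\<close>, where a minimiser exists.\<close>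

lemma matrix_diff_ldistrib: "(A::'a::ring_1^'n^'m) ** (B - C) = A ** B - A ** C"
  by (simp add: matrix_matrix_mult_def vec_eq_iff sum_subtractf algebra_simps)

lemma column_matrix_mult: "column j ((A::'a::semiring_1^'n^'m) ** B) = A *v column j B"
  by (simp add: column_def matrix_matrix_mult_def matrix_vector_mult_def vec_eq_iff)

lemma norm_vec_squared: "(norm (x::'a::real_inner^'n))\<^sup>2 = (\<Sum>i\<in>UNIV. (norm (x$i))\<^sup>2)"
  unfolding power2_norm_eq_inner by (simp add: inner_vec_def)

lemma norm_matrix_squared_columns:
  "(norm (A::real^'c^'m))\<^sup>2 = (\<Sum>j\<in>UNIV. (norm (column j A))\<^sup>2)"
proof -
  have "(norm A)\<^sup>2 = (\<Sum>i\<in>UNIV. \<Sum>j\<in>UNIV. (A$i$j)\<^sup>2)"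
    by (simp add: norm_vec_squared)
  also have "\<dots> = (\<Sum>j\<in>UNIV. \<Sum>i\<in>UNIV. (A$i$j)\<^sup>2)"
    by (rule sum.swap)
  finally show ?thesis by (simp add: norm_vec_squared column_def)
qed

lemma norm_transpose: "norm (transpose (A::real^'c^'m)) = norm A"
proof -
  have "(norm (transpose A))\<^sup>2 = (norm A)\<^sup>2"
    unfolding norm_matrix_squared_columns[of A] by (simp add: norm_vec_squared column_def transpose_def)
  then show ?thesis by simp
qed

lemma norm_matrix_vector_mult_le: "norm ((A::real^'c^'m) *v x) \<le> norm A * norm x"
proof -
  have "(norm (A *v x))\<^sup>2 = (\<Sum>i\<in>UNIV. (A$i \<bullet> x)\<^sup>2)"
    unfolding norm_vec_squared by (simp add: matrix_vector_mult_def inner_vec_def)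
  also have "\<dots> \<le> (\<Sum>i\<in>UNIV. (norm (A$i))\<^sup>2 * (norm x)\<^sup>2)"
    by (intro sum_mono) (metis Cauchy_Schwarz_ineq2 abs_ge_zero power_mono power_mult_distrib power2_abs)
  also have "\<dots> = (norm A * norm x)\<^sup>2"
    by (simp add: norm_vec_squared[of A] power_mult_distrib sum_distrib_right)
  finally show ?thesis by (rule power2_le_imp_le) simp
qed

lemma spec_norm_le_norm: "spec_norm A \<le> norm A"
  unfolding spec_norm_def by (rule onorm_le) (rule norm_matrix_vector_mult_le)

lemma norm_matrix_mult_ge_columnwise:
  fixes A :: "real^'n^'m" and B :: "real^'c^'n"
  assumes "\<And>x. c * norm x \<le> norm (A *v x)" and "0 \<le> c"
  shows "c * norm B \<le> norm (A ** B)"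
proof -
  have "(c * norm B)\<^sup>2 = (\<Sum>j\<in>UNIV. (c * norm (column j B))\<^sup>2)"
    by (simp add: power_mult_distrib norm_matrix_squared_columns sum_distrib_left)
  also have "\<dots> \<le> (\<Sum>j\<in>UNIV. (norm (A *v column j B))\<^sup>2)"
    by (intro sum_mono power_mono assms) (simp add: assms)
  also have "\<dots> = (norm (A ** B))\<^sup>2"
    by (simp add: norm_matrix_squared_columns[of "A ** B"] column_matrix_mult)
  finally show ?thesis by (rule power2_le_imp_le) simp
qed

lemma norm_matrix_mult_le_columnwise:
  fixes A :: "real^'n^'m" and B :: "real^'c^'n"
  assumes "\<And>x. norm (A *v x) \<le> c * norm x" and "0 \<le> c"
  shows "norm (A ** B) \<le> c * norm B"
proof -
  have "(norm (A ** B))\<^sup>2 = (\<Sum>j\<in>UNIV. (norm (A *v column j B))\<^sup>2)"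
    by (simp add: norm_matrix_squared_columns[of "A ** B"] column_matrix_mult)
  also have "\<dots> \<le> (\<Sum>j\<in>UNIV. (c * norm (column j B))\<^sup>2)"
    by (intro sum_mono power_mono assms) simp
  also have "\<dots> = (c * norm B)\<^sup>2"
    by (simp add: power_mult_distrib norm_matrix_squared_columns sum_distrib_left)
  finally show ?thesis by (rule power2_le_imp_le) (simp add: assms)
qed

lemma norm_matrix_mult_le: "norm ((A::real^'n^'m) ** (B::real^'c^'n)) \<le> norm A * norm B"
  by (rule norm_matrix_mult_le_columnwise[OF norm_matrix_vector_mult_le]) simp

lemma matrix_inv_right: "invertible A \<Longrightarrow> A ** matrix_inv A = mat 1"
  and matrix_inv_left: "invertible A \<Longrightarrow> matrix_inv A ** A = mat 1"
  unfolding invertible_def matrix_inv_def by (metis (mono_tags, lifting) someI_ex)+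

lemma matrix_inv_unique_right:
  fixes A B :: "real^'n^'n"
  assumes "A ** B = mat 1"
  shows "invertible A" and "matrix_inv A = B"
proof -
  show inv: "invertible A" using assms invertible_right_inverse by blast
  have "matrix_inv A = matrix_inv A ** (A ** B)" using assms by simp
  also have "\<dots> = B" by (simp add: matrix_mul_assoc matrix_inv_left[OF inv])
  finally show "matrix_inv A = B" .
qed

lemma norm_isometry_mult_vector:
  fixes U :: "real^'r^'n"
  assumes "transpose U ** U = mat 1"
  shows "norm (U *v x) = norm x"
proof -
  have "(norm (U *v x))\<^sup>2 = x \<bullet> (transpose U *v (U *v x))"
    by (simp add: power2_norm_eq_inner dot_lmul_matrix[symmetric] inner_commute)
  also have "\<dots> = (norm x)\<^sup>2"
    by (simp add: matrix_vector_mul_assoc assms power2_norm_eq_inner)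
  finally show ?thesis by simp
qed

lemma sing_val_card_eq_Inf:
  "sing_val CARD('c) (A::real^'c::finite^'m) = Inf {norm (A *v x) | x. norm x = 1}"
proof -
  have "subspace S \<and> dim S = CARD('c) \<longleftrightarrow> S = UNIV" for S :: "(real^'c) set"
  proof
    assume S: "subspace S \<and> dim S = CARD('c)"
    then have "span S = UNIV" using dim_eq_full[of S] by simp
    then show "S = UNIV" using S span_eq_iff by blast
  qed simp
  then have "{Inf {norm (A *v x) | x. x \<in> S \<and> norm x = 1} | S. subspace S \<and> dim S = CARD('c)}
      = {Inf {norm (A *v x) | x. norm x = 1}}" by auto
  then show ?thesis unfolding sing_val_def by simp
qed

lemma sing_val_card_le: "sing_val CARD('c) (A::real^'c::finite^'m) * norm x \<le> norm (A *v x)"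
proof (cases "x = 0")
  case False
  have "sing_val CARD('c) A \<le> norm (A *v (x /\<^sub>R norm x))"
    unfolding sing_val_card_eq_Inf
    by (rule cInf_lower) (use False in \<open>auto intro: bdd_belowI[where m=0]\<close>)
  then show ?thesis using False by (simp add: matrix_vector_mult_scaleR field_simps)
qed simp

lemma sing_val_card_greatest:
  fixes A :: "real^'c::finite^'m"
  assumes "\<And>x. norm x = 1 \<Longrightarrow> c \<le> norm (A *v x)"
  shows "c \<le> sing_val CARD('c) A"
  unfolding sing_val_card_eq_Inf
proof (rule cInf_greatest)
  show "{norm (A *v x) |x. norm x = 1} \<noteq> {}"
    using norm_axis_1[of undefined] by blast
qed (use assms in auto)

lemma sing_val_card_nonneg: "0 \<le> sing_val CARD('c) (A::real^'c::finite^'m)"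
  by (rule sing_val_card_greatest) simp

lemma sing_val_card_pos:
  fixes A :: "real^'c::finite^'m"
  assumes "\<And>x. A *v x = 0 \<Longrightarrow> x = 0"
  shows "0 < sing_val CARD('c) A"
proof -
  have "continuous_on (sphere 0 1) (\<lambda>x. norm (A *v x))"
    by (intro continuous_intros linear_continuous_on matrix_vector_mul_bounded_linear)
  moreover have "sphere (0::real^'c) 1 \<noteq> {}" using norm_axis_1 by fastforce
  ultimately obtain x0 where x0: "norm x0 = 1" and min: "\<And>x. norm x = 1 \<Longrightarrow> norm (A *v x0) \<le> norm (A *v x)"
    using continuous_attains_inf[OF compact_sphere] by (metis mem_sphere_0)
  have "0 < norm (A *v x0)" using assms x0 by fastforce
  also have "\<dots> \<le> sing_val CARD('c) A" by (rule sing_val_card_greatest) (rule min)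
  finally show ?thesis .
qed

lemma sing_val_card_cong:
  fixes A :: "real^'c::finite^'m" and B :: "real^'c^'n"
  assumes "\<And>x. norm (A *v x) = norm (B *v x)"
  shows "sing_val CARD('c) A = sing_val CARD('c) B"
  unfolding sing_val_card_eq_Inf assms ..

lemma sing_val_card_diff_le:
  fixes A B :: "real^'c::finite^'m"
  shows "sing_val CARD('c) B - norm (A - B) \<le> sing_val CARD('c) A"
proof (rule sing_val_card_greatest)
  fix x :: "real^'c" assume x: "norm x = 1"
  have "sing_val CARD('c) B \<le> norm (B *v x)" using sing_val_card_le[of B x] x by simp
  also have "\<dots> = norm (A *v x - (A - B) *v x)"
    by (simp add: matrix_vector_mult_diff_rdistrib)
  also have "\<dots> \<le> norm (A *v x) + norm ((A - B) *v x)"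
    by (rule norm_triangle_ineq4)
  also have "norm ((A - B) *v x) \<le> norm (A - B)"
    using norm_matrix_vector_mult_le[of "A - B" x] x by simp
  finally show "sing_val CARD('c) B - norm (A - B) \<le> norm (A *v x)" by simp
qed

lemma norm_matrix_vector_le_sing_val_1:
  "norm ((A::real^'c::finite^'m) *v x) \<le> sing_val 1 A * norm x"
proof -
  let ?T = "{Inf {norm (A *v x) | x. x \<in> S \<and> norm x = 1} | S::(real^'c) set. subspace S \<and> dim S = 1}"
  have bdd: "bdd_above ?T"
  proof (rule bdd_aboveI)
    fix t assume "t \<in> ?T"
    then obtain S :: "(real^'c) set" where S: "subspace S" "dim S = 1"
      and t: "t = Inf {norm (A *v x) | x. x \<in> S \<and> norm x = 1}" by blast
    then obtain y where y: "y \<in> S" "y \<noteq> 0" using dim_eq_0[of S] by auto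
    have z: "y /\<^sub>R norm y \<in> S" "norm (y /\<^sub>R norm y) = 1" using y S by (auto simp: subspace_scale)
    have "t \<le> norm (A *v (y /\<^sub>R norm y))" unfolding t
      by (rule cInf_lower) (use z in \<open>auto intro: bdd_belowI[where m=0]\<close>)
    also have "\<dots> \<le> norm A" using norm_matrix_vector_mult_le[of A "y /\<^sub>R norm y"] z by simp
    finally show "t \<le> norm A" .
  qed
  have unit: "norm (A *v u) \<le> sing_val 1 A" if u: "norm u = 1" for u
  proof -
    have "{norm (A *v x) | x. x \<in> span {u} \<and> norm x = 1} = {norm (A *v u)}"
      using u by (auto simp: span_singleton matrix_vector_mult_scaleR intro!: exI[of _ u] image_eqI[of u _ 1])
    moreover have "subspace (span {u})" "dim (span {u}) = 1"
      using u by auto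
    ultimately have "norm (A *v u) \<in> ?T"
      unfolding mem_Collect_eq by (intro exI[of _ "span {u}"]) simp
    then show ?thesis unfolding sing_val_def using bdd by (rule cSup_upper)
  qed
  show ?thesis
  proof (cases "x = 0")
    case False
    have "norm (A *v (x /\<^sub>R norm x)) \<le> sing_val 1 A" by (rule unit) (use False in simp)
    then show ?thesis using False by (simp add: matrix_vector_mult_scaleR field_simps)
  qed simp
qed

lemma sing_val_1_nonneg: "0 \<le> sing_val 1 (A::real^'c::finite^'m)"
  using order_trans[OF norm_ge_zero norm_matrix_vector_le_sing_val_1[of A "axis undefined 1"]]
  by simp

lemma norm_matrix_mult_ge_sing_val_card:
  "sing_val CARD('n) (A::real^'n::finite^'m) * norm (M::real^'c^'n) \<le> norm (A ** M)"
  by (rule norm_matrix_mult_ge_columnwise[OF sing_val_card_le sing_val_card_nonneg])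

lemma norm_matrix_mult_le_sing_val_1:
  "norm ((A::real^'n::finite^'m) ** (M::real^'c^'n)) \<le> sing_val 1 A * norm M"
  by (rule norm_matrix_mult_le_columnwise[OF norm_matrix_vector_le_sing_val_1 sing_val_1_nonneg])

lemma diag_mat_mult_vector: "diag_mat d *v x = (\<chi> i. d i * x$i)"
  by (simp add: diag_mat_def matrix_vector_mult_def vec_eq_iff if_distrib if_distribR cong: if_cong)

lemma ground_truth_factors_sing_val:
  fixes U :: "real^'r::finite^'n1::finite" and V :: "real^'r^'n2::finite" and s :: "'r \<Rightarrow> real"
  assumes "transpose U ** U = mat 1" and "transpose V ** V = mat 1" and "\<forall>i. 0 < s i"
  shows "0 < sing_val CARD('r) (U ** diag_mat (\<lambda>i. sqrt (s i)))"
    and "sing_val CARD('r) (V ** diag_mat (\<lambda>i. sqrt (s i)))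
         = sing_val CARD('r) (U ** diag_mat (\<lambda>i. sqrt (s i)))"
proof -
  let ?D = "diag_mat (\<lambda>i. sqrt (s i))"
  have U: "norm ((U ** ?D) *v x) = norm (?D *v x)"
    and V: "norm ((V ** ?D) *v x) = norm (?D *v x)" for x
    using norm_isometry_mult_vector assms(1,2) by (metis matrix_vector_mul_assoc)+
  have "x = 0" if "(U ** ?D) *v x = 0" for x
  proof -
    have "?D *v x = 0" using U[of x] that by simp
    then show "x = 0" using assms(3) by (simp add: diag_mat_mult_vector vec_eq_iff) (metis less_irrefl)
  qed
  then show "0 < sing_val CARD('r) (U ** ?D)" by (rule sing_val_card_pos)
  show "sing_val CARD('r) (V ** ?D) = sing_val CARD('r) (U ** ?D)"
    by (rule sing_val_card_cong) (simp add: U V)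
qed

lemma norm_mult_ge_of_close:
  fixes A B :: "real^'n::finite^'m" and M :: "real^'c^'n"
  assumes "norm (A - B) \<le> \<delta>" and "\<delta> \<le> sing_val CARD('n) B"
  shows "(sing_val CARD('n) B - \<delta>) * norm M \<le> norm (A ** M)"
proof -
  have "sing_val CARD('n) B - \<delta> \<le> sing_val CARD('n) A"
    using sing_val_card_diff_le[of B A] assms(1) by simp
  then have "(sing_val CARD('n) B - \<delta>) * norm M \<le> sing_val CARD('n) A * norm M"
    by (simp add: mult_right_mono)
  also have "\<dots> \<le> norm (A ** M)" by (rule norm_matrix_mult_ge_sing_val_card)
  finally show ?thesis .
qed

lemma alignment_distance_bound:
  fixes X Xs :: "real^'r::finite^'n" and P Q :: "real^'r^'r"
  assumes "invertible P"
    and "norm (X ** P - Xs) \<le> \<delta>" and "norm (X ** Q - Xs) \<le> \<epsilon>"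
    and "\<delta> \<le> sing_val CARD('r) Xs"
  shows "(sing_val CARD('r) Xs - \<delta>) * norm (Q - P) \<le> sing_val 1 P * (\<epsilon> + \<delta>)"
proof -
  define M where "M = matrix_inv P ** (Q - P)"
  have PM: "P ** M = Q - P"
    unfolding M_def by (simp add: matrix_mul_assoc matrix_inv_right[OF assms(1)])
  have "(sing_val CARD('r) Xs - \<delta>) * norm M \<le> norm ((X ** P) ** M)"
    using norm_mult_ge_of_close assms(2,4) by blast
  also have "(X ** P) ** M = (X ** Q - Xs) - (X ** P - Xs)"
    by (simp add: PM flip: matrix_mul_assoc add: matrix_diff_ldistrib)
  also have "norm \<dots> \<le> \<epsilon> + \<delta>"
    using norm_triangle_ineq4[of "X ** Q - Xs" "X ** P - Xs"] assms(2,3) by linarith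
  finally have M: "(sing_val CARD('r) Xs - \<delta>) * norm M \<le> \<epsilon> + \<delta>" .
  have "(sing_val CARD('r) Xs - \<delta>) * norm (Q - P)
      \<le> (sing_val CARD('r) Xs - \<delta>) * (sing_val 1 P * norm M)"
    unfolding PM[symmetric] using assms(4) by (intro mult_left_mono norm_matrix_mult_le_sing_val_1) simp
  also have "\<dots> \<le> sing_val 1 P * (\<epsilon> + \<delta>)"
    using mult_left_mono[OF M sing_val_1_nonneg[of P]] by (simp add: ac_simps)
  finally show ?thesis .
qed

lemma alignment_inverse_bound:
  fixes Y Ys :: "real^'r::finite^'n" and P Q :: "real^'r^'r"
  assumes "invertible P" and "invertible Q"
    and "norm (Y ** transpose (matrix_inv P) - Ys) \<le> \<delta>"
    and "norm (Y ** transpose (matrix_inv Q) - Ys) \<le> \<epsilon>"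
    and "\<delta> < sing_val CARD('r) Ys"
  shows "norm (matrix_inv Q) \<le> (norm Ys + \<epsilon>) / (sing_val CARD('r) Ys - \<delta>) * norm (matrix_inv P)"
proof -
  define W where "W = matrix_inv Q ** P"
  have "(sing_val CARD('r) Ys - \<delta>) * norm (transpose W)
      \<le> norm ((Y ** transpose (matrix_inv P)) ** transpose W)"
    using norm_mult_ge_of_close assms(3,5) less_imp_le by blast
  also have "(Y ** transpose (matrix_inv P)) ** transpose W = Y ** transpose (matrix_inv Q)"
    unfolding W_def
    by (simp add: matrix_mul_assoc[symmetric] matrix_transpose_mul[symmetric] matrix_inv_right[OF assms(1)])
  also have "norm \<dots> \<le> norm Ys + \<epsilon>"
    using norm_triangle_sub[of "Y ** transpose (matrix_inv Q)" Ys] assms(4) by linarith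
  finally have "norm W \<le> (norm Ys + \<epsilon>) / (sing_val CARD('r) Ys - \<delta>)"
    using assms(5) by (simp add: norm_transpose pos_le_divide_eq mult.commute)
  moreover have "norm (matrix_inv Q) \<le> norm W * norm (matrix_inv P)"
    using norm_matrix_mult_le[of W "matrix_inv P"]
    by (simp add: W_def matrix_mul_assoc[symmetric] matrix_inv_right[OF assms(1)])
  ultimately show ?thesis by (meson mult_right_mono norm_ge_zero order_trans)
qed

lemma invertible_minimizer_exists:
  fixes f :: "real^'n::finite^'n \<Rightarrow> real^'n^'n \<Rightarrow> real" and P :: "real^'n^'n"
  assumes cont: "continuous_on UNIV (case_prod f)"
    and P: "invertible P"
    and sublevel: "\<And>Q. invertible Q \<Longrightarrow> f Q (matrix_inv Q) \<le> f P (matrix_inv P)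
                      \<Longrightarrow> norm Q \<le> B \<and> norm (matrix_inv Q) \<le> C"
  shows "\<exists>Q. invertible Q \<and> (\<forall>Q'. invertible Q' \<longrightarrow> f Q (matrix_inv Q) \<le> f Q' (matrix_inv Q'))"
proof -
  define D where
    "D = {z::(real^'n^'n) \<times> (real^'n^'n). fst z ** snd z = mat 1} \<inter> (cball 0 B \<times> cball 0 C)"
  have "closed {z::(real^'n^'n) \<times> (real^'n^'n). fst z ** snd z = mat 1}"
    unfolding matrix_matrix_mult_def by (intro closed_Collect_eq continuous_intros)
  then have "compact D" unfolding D_def by (intro closed_Int_compact compact_Times compact_cball)
  have inD: "(Q, matrix_inv Q) \<in> D" if "invertible Q" "f Q (matrix_inv Q) \<le> f P (matrix_inv P)" for Q
    using sublevel[OF that] matrix_inv_right[OF that(1)] unfolding D_def by simp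
  obtain z0 where "z0 \<in> D" and z0_min: "\<And>z. z \<in> D \<Longrightarrow> case_prod f z0 \<le> case_prod f z"
    using continuous_attains_inf[OF \<open>compact D\<close> _ continuous_on_subset[OF cont]] inD[OF P order_refl]
    by blast
  define Q0 where "Q0 = fst z0"
  have Q0_R: "Q0 ** snd z0 = mat 1" using \<open>z0 \<in> D\<close> unfolding D_def Q0_def by simp
  then have Q0: "invertible Q0" by (rule matrix_inv_unique_right)
  have z0: "z0 = (Q0, matrix_inv Q0)" using matrix_inv_unique_right(2)[OF Q0_R] unfolding Q0_def by simp
  have "f Q0 (matrix_inv Q0) \<le> f Q' (matrix_inv Q')" if Q': "invertible Q'" for Q'
  proof (cases "f Q' (matrix_inv Q') \<le> f P (matrix_inv P)")
    case True
    then show ?thesis using z0_min[OF inD[OF Q' True]] z0 by simp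
  next
    case False
    then show ?thesis using z0_min[OF inD[OF P order_refl]] z0 by simp
  qed
  then show ?thesis using Q0 by blast
qed

text \<open>The second matrix argument stands for \<open>Q\<^sup>-\<^sup>1\<close>: the paper's \<open>g(Q)\<close> is
  \<open>alignment_loss X Y Xs Ys Q (matrix_inv Q)\<close>. Decoupling the inverse makes the loss jointly
  continuous on pairs \<open>(Q, R)\<close>, and \<open>Q R = 1\<close> is a closed condition on such pairs.\<close>

definition alignment_loss ::
  "real^'r^'n1 \<Rightarrow> real^'r^'n2 \<Rightarrow> real^'r^'n1 \<Rightarrow> real^'r^'n2 \<Rightarrow> real^'r^'r \<Rightarrow> real^'r^'r \<Rightarrow> real"
  where "alignment_loss X Y Xs Ys Q R = (norm (X ** Q - Xs))\<^sup>2 + (norm (Y ** transpose R - Ys))\<^sup>2"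

lemma continuous_alignment_loss: "continuous_on UNIV (case_prod (alignment_loss X Y Xs Ys))"
  unfolding alignment_loss_def matrix_matrix_mult_def transpose_def case_prod_unfold
  by (intro continuous_intros)

lemma alignment_loss_sublevel_bounds:
  fixes X Xs :: "real^'r::finite^'n1" and Y Ys :: "real^'r^'n2" and P Q :: "real^'r^'r"
  assumes P: "invertible P" and Q: "invertible Q" and P_hi: "sing_val 1 P \<le> 3/2"
    and fitX: "norm (X ** P - Xs) \<le> \<delta>"
    and fitY: "norm (Y ** transpose (matrix_inv P) - Ys) \<le> \<delta>"
    and sub: "alignment_loss X Y Xs Ys Q (matrix_inv Q) \<le> alignment_loss X Y Xs Ys P (matrix_inv P)"
    and \<sigma>_pos: "0 < sing_val CARD('r) Xs" and \<delta>_small: "\<delta> \<le> sing_val CARD('r) Xs / 80"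
    and \<delta>_Ys: "\<delta> < sing_val CARD('r) Ys"
  shows "norm (Q - P) \<le> 5 * \<delta> / sing_val CARD('r) Xs"
    and "norm (matrix_inv Q) \<le> (norm Ys + 3/2 * \<delta>) / (sing_val CARD('r) Ys - \<delta>) * norm (matrix_inv P)"
proof -
  let ?\<sigma> = "sing_val CARD('r) Xs"
  have "0 \<le> \<delta>" using fitX norm_ge_zero order_trans by blast
  have loss_P: "alignment_loss X Y Xs Ys P (matrix_inv P) \<le> 2 * \<delta>\<^sup>2"
    using power_mono[OF fitX norm_ge_zero, of 2] power_mono[OF fitY norm_ge_zero, of 2]
    unfolding alignment_loss_def by linarith
  have "2 * \<delta>\<^sup>2 \<le> (3/2 * \<delta>)\<^sup>2" by (simp add: power2_eq_square)
  then have residual: "a \<le> 3/2 * \<delta>"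
    if "0 \<le> a" "a\<^sup>2 \<le> alignment_loss X Y Xs Ys Q (matrix_inv Q)" for a
  proof -
    have "a\<^sup>2 \<le> (3/2 * \<delta>)\<^sup>2" using that(2) sub loss_P \<open>2 * \<delta>\<^sup>2 \<le> _\<close> by linarith
    then show ?thesis by (rule power2_le_imp_le) (use \<open>0 \<le> \<delta>\<close> in simp)
  qed
  have resX: "norm (X ** Q - Xs) \<le> 3/2 * \<delta>"
    and resY: "norm (Y ** transpose (matrix_inv Q) - Ys) \<le> 3/2 * \<delta>"
    by (rule residual; simp add: alignment_loss_def)+
  have "(?\<sigma> - \<delta>) * norm (Q - P) \<le> sing_val 1 P * (3/2 * \<delta> + \<delta>)"
    using alignment_distance_bound[OF P fitX resX] \<delta>_small \<sigma>_pos by simp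
  also have "\<dots> \<le> 3/2 * (5/2 * \<delta>)"
    using mult_right_mono[OF P_hi, of "5/2 * \<delta>"] \<open>0 \<le> \<delta>\<close> by simp
  finally have "(?\<sigma> - \<delta>) * norm (Q - P) \<le> 15/4 * \<delta>" by simp
  moreover have "79/80 * ?\<sigma> * norm (Q - P) \<le> (?\<sigma> - \<delta>) * norm (Q - P)"
    using \<delta>_small by (intro mult_right_mono) simp_all
  ultimately have "?\<sigma> * norm (Q - P) \<le> 5 * \<delta>" using \<open>0 \<le> \<delta>\<close> by linarith
  then show "norm (Q - P) \<le> 5 * \<delta> / ?\<sigma>"
    using \<sigma>_pos by (simp add: pos_le_divide_eq mult.commute)
  show "norm (matrix_inv Q) \<le> (norm Ys + 3/2 * \<delta>) / (sing_val CARD('r) Ys - \<delta>) * norm (matrix_inv P)"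
    by (rule alignment_inverse_bound[OF P Q fitY resY \<delta>_Ys])
qed

theorem lemma1:
  fixes U :: "real^'r::finite^'n1::finite"
    and V :: "real^'r^'n2::finite"
    and s :: "'r \<Rightarrow> real"
    and Xs X :: "real^'r^'n1"
    and Ys Y :: "real^'r^'n2"
    and P :: "real^'r^'r"
    and \<delta> :: real
  assumes U_orth: "transpose U ** U = mat 1"
    and V_orth: "transpose V ** V = mat 1"
    and s_pos: "\<forall>i. s i > 0"
    and Xs_def: "Xs = U ** diag_mat (\<lambda>i. sqrt (s i))"
    and Ys_def: "Ys = V ** diag_mat (\<lambda>i. sqrt (s i))"
    and P_inv: "invertible P"
    and P_lo: "1/2 \<le> sing_val CARD('r) P"
    and P_hi: "sing_val 1 P \<le> 3/2"
    and close: "max (norm (X ** P - Xs)) (norm (Y ** transpose (matrix_inv P) - Ys)) \<le> \<delta>"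
    and delta_small: "\<delta> \<le> sing_val CARD('r) Xs / 80"
  shows "(\<exists>Q::real^'r^'r. invertible Q \<and>
            (\<forall>Q'::real^'r^'r. invertible Q' \<longrightarrow>
               (norm (X ** Q - Xs))\<^sup>2 + (norm (Y ** transpose (matrix_inv Q) - Ys))\<^sup>2
               \<le> (norm (X ** Q' - Xs))\<^sup>2 + (norm (Y ** transpose (matrix_inv Q') - Ys))\<^sup>2))
       \<and> (\<forall>Q::real^'r^'r. invertible Q \<and>
            (\<forall>Q'::real^'r^'r. invertible Q' \<longrightarrow>
               (norm (X ** Q - Xs))\<^sup>2 + (norm (Y ** transpose (matrix_inv Q) - Ys))\<^sup>2
               \<le> (norm (X ** Q' - Xs))\<^sup>2 + (norm (Y ** transpose (matrix_inv Q') - Ys))\<^sup>2)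
            \<longrightarrow> spec_norm (P - Q) \<le> norm (P - Q)
              \<and> norm (P - Q) \<le> 5 * \<delta> / sing_val CARD('r) Xs)"
proof -
  let ?\<sigma> = "sing_val CARD('r) Xs"
  let ?g = "\<lambda>Q. alignment_loss X Y Xs Ys Q (matrix_inv Q)"
  have \<sigma>: "0 < ?\<sigma>" "sing_val CARD('r) Ys = ?\<sigma>"
    unfolding Xs_def Ys_def using ground_truth_factors_sing_val[OF U_orth V_orth s_pos] by auto
  have fit: "norm (X ** P - Xs) \<le> \<delta>" "norm (Y ** transpose (matrix_inv P) - Ys) \<le> \<delta>"
    using close by simp_all
  have "\<delta> < sing_val CARD('r) Ys" using \<sigma> delta_small by simp
  note sublevel = alignment_loss_sublevel_bounds[OF P_inv _ P_hi fit _ \<sigma>(1) delta_small this]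
  have "\<exists>Q. invertible Q \<and> (\<forall>Q'. invertible Q' \<longrightarrow> ?g Q \<le> ?g Q')"
  proof (rule invertible_minimizer_exists[OF continuous_alignment_loss P_inv])
    fix Q assume "invertible Q" "?g Q \<le> ?g P"
    then show "norm Q \<le> norm P + 5 * \<delta> / ?\<sigma> \<and> norm (matrix_inv Q)
        \<le> (norm Ys + 3/2 * \<delta>) / (sing_val CARD('r) Ys - \<delta>) * norm (matrix_inv P)"
      using sublevel norm_triangle_sub[of Q P] by fastforce
  qed
  moreover have "spec_norm (P - Q) \<le> norm (P - Q) \<and> norm (P - Q) \<le> 5 * \<delta> / ?\<sigma>"
    if "invertible Q" "\<forall>Q'. invertible Q' \<longrightarrow> ?g Q \<le> ?g Q'" for Q
    using spec_norm_le_norm sublevel(1)[OF that(1)] that(2) P_inv by (simp add: norm_minus_commute)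
  ultimately show ?thesis unfolding alignment_loss_def by blast
qed

end
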